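(* Assume $l=-\infty$ and $r=\infty$. The following are equivalent: (a) there exists $y\in I$ such that $G_y(a)<\infty$ for all $a>0$; (b) $G_y(a)<\infty$ for all $y\in I$ and all $a>0$.
   Context: Let $-\infty\le l<r\le\infty$, $I=(l,r)$, $\eta\colon\mathbb R\to\mathbb R$ Borel with $\eta\ne0$ on $I$, $1/\eta^2\in L^1_{\mathrm{loc}}(I)$, $\eta=0$ off $I$. For $y\in I$, $x\in\mathbb R$, $q(y,x)=\int_y^x\int_y^u\frac{2}{\eta^2(z)}\,dz\,du\in[0,\infty]$. Let $\mu\ne\delta_0$ be a centered probability measure on $\mathbb R$ with finite first moment. For $y\in I$, $a\ge0$, $G_y(a)=\int_{\mathbb R} q(y,y+ax)\,\mu(dx)\in[0,\infty]$. *)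

theory Defs
  imports "HOL-Probability.Probability"
begin

text \<open>Scale function q(y,x) = int_y^x int_y^u 2/eta(z)^2 dz du, valued in [0,\<infinity>].
  For x < y both oriented integrals are reversed, giving the nonnegative value
  int_x^y int_u^y 2/eta(z)^2 dz du.\<close>
definition q :: "(real \<Rightarrow> real) \<Rightarrow> real \<Rightarrow> real \<Rightarrow> ennreal" where
  "q \<eta> y x =
     (if y \<le> x
      then (\<integral>\<^sup>+ u \<in> {y..x}. (\<integral>\<^sup>+ z \<in> {y..u}. ennreal (2 / (\<eta> z)\<^sup>2) \<partial>lborel) \<partial>lborel)
      else (\<integral>\<^sup>+ u \<in> {x..y}. (\<integral>\<^sup>+ z \<in> {u..y}. ennreal (2 / (\<eta> z)\<^sup>2) \<partial>lborel) \<partial>lborel))"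

definition G :: "(real \<Rightarrow> real) \<Rightarrow> real measure \<Rightarrow> real \<Rightarrow> real \<Rightarrow> ennreal" where
  "G \<eta> \<mu> y a = (\<integral>\<^sup>+ x. q \<eta> y (y + a * x) \<partial>\<mu>)"

end

theory Submission
  imports Defs
begin

text \<open>
  Only the direction (a) \<Longrightarrow> (b) has content.  Write f = 2/eta^2 and mass f a b for the integral
  of f over [a,b].  The scale function splits as q(y,x) = R(y,x) + L(y,x) (scale_fun below),
  where R(y,x) integrates mass f y u over u \<in> [y,x] and L(y,x) integrates mass f u y over
  u \<in> [x,y]; at most one half is nonzero, R(y,-) is nondecreasing and L(y,-) nonincreasing.
  This yields two elementary estimates, proved for any measurable density f:
  (i) rebasing, q(y,x) \<le> q(y0,x) + K |x - y| with K the mass of f between y0 and y;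
  (ii) shifting, q(y0, y0 + d + a x) \<le> q(y0, y0 + b x) + q(y0, y0 + b) + q(y0, y0 - b)
       for b = |d| + a, because d + a x lies between min (b x) (-b) and max (b x) b.
  With d = y - y0 they combine to q(y, y + a x) \<le> q(y0, y0 + b x) + C + K a |x|, and
  integrating against \<mu>, which has a finite first moment, gives
  G_y(a) \<le> G_y0(b) + C + K a E|X| < \<infinity>.  Local integrability of 1/eta^2 makes every mass,
  hence C and K, finite.
\<close>

definition mass :: "(real \<Rightarrow> ennreal) \<Rightarrow> real \<Rightarrow> real \<Rightarrow> ennreal" where
  "mass f a b = (\<integral>\<^sup>+ z \<in> {a..b}. f z \<partial>lborel)"

definition scale_right :: "(real \<Rightarrow> ennreal) \<Rightarrow> real \<Rightarrow> real \<Rightarrow> ennreal" where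
  "scale_right f y x = (\<integral>\<^sup>+ u \<in> {y..x}. mass f y u \<partial>lborel)"

definition scale_left :: "(real \<Rightarrow> ennreal) \<Rightarrow> real \<Rightarrow> real \<Rightarrow> ennreal" where
  "scale_left f y x = (\<integral>\<^sup>+ u \<in> {x..y}. mass f u y \<partial>lborel)"

definition scale_fun :: "(real \<Rightarrow> ennreal) \<Rightarrow> real \<Rightarrow> real \<Rightarrow> ennreal" where
  "scale_fun f y x = scale_right f y x + scale_left f y x"

lemma measurable_interval_integral:
  fixes f :: "real \<Rightarrow> ennreal" and lo hi :: "real \<Rightarrow> real"
  assumes [measurable]: "f \<in> borel_measurable borel" "lo \<in> borel_measurable borel"
    "hi \<in> borel_measurable borel"
  shows "(\<lambda>u. \<integral>\<^sup>+ z \<in> {lo u..hi u}. f z \<partial>lborel) \<in> borel_measurable borel"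
proof -
  have "(\<lambda>p. f (snd p) * indicator {p. lo (fst p) \<le> snd p \<and> snd p \<le> hi (fst p)} p)
          \<in> borel_measurable (borel \<Otimes>\<^sub>M lborel)"
    by measurable
  then have "(\<lambda>(u, z). f z * indicator {lo u..hi u} z) \<in> borel_measurable (borel \<Otimes>\<^sub>M lborel)"
    by (rule measurable_cong[THEN iffD1, rotated]) (auto simp: indicator_def)
  then show ?thesis
    by (rule lborel.borel_measurable_nn_integral[where f="\<lambda>u z. f z * indicator {lo u..hi u} z",
          simplified])
qed

lemma mass_measurable:
  assumes "f \<in> borel_measurable borel"
  shows "mass f y \<in> borel_measurable borel" and "(\<lambda>u. mass f u y) \<in> borel_measurable borel"
  unfolding mass_def using assms by (auto intro!: measurable_interval_integral)

lemma scale_fun_measurable: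
  assumes "f \<in> borel_measurable borel"
  shows "scale_fun f y \<in> borel_measurable borel"
proof -
  have "scale_right f y \<in> borel_measurable borel" "scale_left f y \<in> borel_measurable borel"
    unfolding scale_right_def scale_left_def
    using mass_measurable[OF assms] by (auto intro!: measurable_interval_integral)
  then show ?thesis
    unfolding scale_fun_def[abs_def] by measurable
qed

lemma mass_mono: "a' \<le> a \<Longrightarrow> b \<le> b' \<Longrightarrow> mass f a b \<le> mass f a' b'"
  unfolding mass_def by (intro nn_integral_mono) (auto simp: indicator_def)

lemma mass_empty: "b < a \<Longrightarrow> mass f a b = 0"
  unfolding mass_def by simp

lemma mass_rebase:
  fixes y y' u :: real
  assumes f: "f \<in> borel_measurable borel"
  defines "K \<equiv> mass f (min y y') (max y y')"
  shows "mass f y' u \<le> K + mass f y u" and "mass f u y' \<le> K + mass f u y"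
proof -
  have "mass f y' u \<le> (\<integral>\<^sup>+ z. f z * indicator {min y y'..max y y'} z
                                + f z * indicator {y..u} z \<partial>lborel)"
    unfolding mass_def by (intro nn_integral_mono) (auto simp: indicator_def)
  also have "\<dots> = K + mass f y u"
    unfolding K_def mass_def using f by (intro nn_integral_add) auto
  finally show "mass f y' u \<le> K + mass f y u" .
  have "mass f u y' \<le> (\<integral>\<^sup>+ z. f z * indicator {min y y'..max y y'} z
                                + f z * indicator {u..y} z \<partial>lborel)"
    unfolding mass_def by (intro nn_integral_mono) (auto simp: indicator_def)
  also have "\<dots> = K + mass f u y"
    unfolding K_def mass_def using f by (intro nn_integral_add) auto
  finally show "mass f u y' \<le> K + mass f u y" .
qed

text \<open>Crude bounds for the two halves; they show finiteness and that each half vanishes on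
  the wrong side of the base point.\<close>
lemma scale_right_le: "scale_right f y x \<le> mass f y x * ennreal (x - y)"
proof -
  have "scale_right f y x \<le> (\<integral>\<^sup>+ u. mass f y x * indicator {y..x} u \<partial>lborel)"
    unfolding scale_right_def by (intro nn_integral_mono) (auto simp: indicator_def mass_mono)
  also have "\<dots> = mass f y x * ennreal (x - y)"
    by (subst nn_integral_cmult_indicator) (auto simp: emeasure_lborel_Icc_eq ennreal_neg)
  finally show ?thesis .
qed

lemma scale_left_le: "scale_left f y x \<le> mass f x y * ennreal (y - x)"
proof -
  have "scale_left f y x \<le> (\<integral>\<^sup>+ u. mass f x y * indicator {x..y} u \<partial>lborel)"
    unfolding scale_left_def by (intro nn_integral_mono) (auto simp: indicator_def mass_mono)
  also have "\<dots> = mass f x y * ennreal (y - x)"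
    by (subst nn_integral_cmult_indicator) (auto simp: emeasure_lborel_Icc_eq ennreal_neg)
  finally show ?thesis .
qed

lemma scale_fun_finite:
  assumes "\<And>a b. mass f a b < \<infinity>"
  shows "scale_fun f y x < \<infinity>"
  using le_less_trans[OF scale_right_le] le_less_trans[OF scale_left_le] assms
  unfolding scale_fun_def by (simp add: ennreal_mult_less_top)

lemma scale_right_mono: "x \<le> x' \<Longrightarrow> scale_right f y x \<le> scale_right f y x'"
  unfolding scale_right_def by (intro nn_integral_mono) (auto simp: indicator_def)

lemma scale_left_antimono: "x \<le> x' \<Longrightarrow> scale_left f y x' \<le> scale_left f y x"
  unfolding scale_left_def by (intro nn_integral_mono) (auto simp: indicator_def)

lemma scale_right_rebase:
  fixes y0 y x :: real
  assumes f: "f \<in> borel_measurable borel"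
  defines "K \<equiv> mass f (min y0 y) (max y0 y)"
  shows "scale_right f y x \<le> K * ennreal (x - y) + scale_right f y0 x"
proof -
  have "scale_right f y x \<le> (\<integral>\<^sup>+ u. K * indicator {y..x} u
                                      + mass f y0 u * indicator {y0..x} u \<partial>lborel)"
    unfolding scale_right_def
  proof (intro nn_integral_mono)
    fix u
    have "mass f y u \<le> K + mass f y0 u"
      unfolding K_def by (rule mass_rebase(1)[OF f])
    moreover have "mass f y0 u = 0" if "u < y0"
      using that by (rule mass_empty)
    ultimately show "mass f y u * indicator {y..x} u
                       \<le> K * indicator {y..x} u + mass f y0 u * indicator {y0..x} u"
      by (cases "u < y0") (auto simp: indicator_def)
  qed
  also have "\<dots> = K * ennreal (x - y) + scale_right f y0 x"
    unfolding scale_right_def using mass_measurable[OF f]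
    by (subst nn_integral_add)
       (auto simp: nn_integral_cmult_indicator emeasure_lborel_Icc_eq ennreal_neg)
  finally show ?thesis .
qed

lemma scale_left_rebase:
  fixes y0 y x :: real
  assumes f: "f \<in> borel_measurable borel"
  defines "K \<equiv> mass f (min y0 y) (max y0 y)"
  shows "scale_left f y x \<le> K * ennreal (y - x) + scale_left f y0 x"
proof -
  have "scale_left f y x \<le> (\<integral>\<^sup>+ u. K * indicator {x..y} u
                                     + mass f u y0 * indicator {x..y0} u \<partial>lborel)"
    unfolding scale_left_def
  proof (intro nn_integral_mono)
    fix u
    have "mass f u y \<le> K + mass f u y0"
      unfolding K_def by (rule mass_rebase(2)[OF f])
    moreover have "mass f u y0 = 0" if "y0 < u"
      using that by (rule mass_empty)
    ultimately show "mass f u y * indicator {x..y} u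
                       \<le> K * indicator {x..y} u + mass f u y0 * indicator {x..y0} u"
      by (cases "y0 < u") (auto simp: indicator_def)
  qed
  also have "\<dots> = K * ennreal (y - x) + scale_left f y0 x"
    unfolding scale_left_def using mass_measurable[OF f]
    by (subst nn_integral_add)
       (auto simp: nn_integral_cmult_indicator emeasure_lborel_Icc_eq ennreal_neg)
  finally show ?thesis .
qed

lemma scale_rebase:
  assumes f: "f \<in> borel_measurable borel"
  shows "scale_fun f y x \<le> scale_fun f y0 x + mass f (min y0 y) (max y0 y) * ennreal \<bar>x - y\<bar>"
proof -
  let ?K = "mass f (min y0 y) (max y0 y)"
  have "scale_fun f y x \<le> (?K * ennreal (x - y) + scale_right f y0 x)
                        + (?K * ennreal (y - x) + scale_left f y0 x)"
    unfolding scale_fun_def by (intro add_mono scale_right_rebase[OF f] scale_left_rebase[OF f])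
  also have "\<dots> = scale_fun f y0 x + ?K * (ennreal (x - y) + ennreal (y - x))"
    unfolding scale_fun_def by (simp add: distrib_left ac_simps)
  also have "ennreal (x - y) + ennreal (y - x) = ennreal \<bar>x - y\<bar>"
    by (simp add: abs_real_def ennreal_neg)
  finally show ?thesis .
qed

text \<open>The shifted, rescaled argument d + a x always lies between min (b x) (-b) and
  max (b x) b when b = |d| + a; monotonicity of both halves then bounds the scale function at
  y + d + a x by its values at y + b x, y + b and y - b.\<close>
lemma shift_bracket:
  fixes a d x :: real
  assumes "0 \<le> a"
  defines "b \<equiv> \<bar>d\<bar> + a"
  shows "d + a * x \<le> max (b * x) b" and "min (b * x) (- b) \<le> d + a * x"
proof -
  have "\<bar>d\<bar> \<le> \<bar>d\<bar> * x" if "1 \<le> x" using that mult_left_mono[of 1 x "\<bar>d\<bar>"] by simp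
  moreover have "a * x \<le> a" if "x < 1" using assms that mult_left_mono[of x 1 a] by simp
  ultimately show "d + a * x \<le> max (b * x) b"
    unfolding b_def by (cases "1 \<le> x") (auto simp: distrib_right)
  have "\<bar>d\<bar> * x \<le> - \<bar>d\<bar>" if "x \<le> -1" using that mult_left_mono[of x "-1" "\<bar>d\<bar>"] by simp
  moreover have "- a \<le> a * x" if "-1 < x" using assms that mult_left_mono[of "-1" x a] by simp
  ultimately show "min (b * x) (- b) \<le> d + a * x"
    unfolding b_def by (cases "x \<le> -1") (auto simp: distrib_right)
qed

lemma scale_shift:
  fixes a d x y :: real
  assumes "0 \<le> a"
  defines "b \<equiv> \<bar>d\<bar> + a"
  shows "scale_fun f y (y + (d + a * x))
           \<le> scale_fun f y (y + b * x) + (scale_fun f y (y + b) + scale_fun f y (y - b))"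
proof -
  have "scale_right f y (y + (d + a * x)) \<le> scale_right f y (y + max (b * x) b)"
    using shift_bracket(1)[OF assms(1)] unfolding b_def by (intro scale_right_mono) simp
  also have "\<dots> \<le> scale_right f y (y + b * x) + scale_right f y (y + b)"
    by (cases "b * x \<le> b") (auto simp: max_def add_increasing add_increasing2)
  finally have right: "scale_right f y (y + (d + a * x))
                         \<le> scale_right f y (y + b * x) + scale_right f y (y + b)" .
  have "scale_left f y (y + (d + a * x)) \<le> scale_left f y (y + min (b * x) (- b))"
    using shift_bracket(2)[OF assms(1)] unfolding b_def by (intro scale_left_antimono) simp
  also have "\<dots> \<le> scale_left f y (y + b * x) + scale_left f y (y - b)"
    by (cases "b * x \<le> - b") (auto simp: min_def add_increasing add_increasing2)
  finally have left: "scale_left f y (y + (d + a * x))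
                        \<le> scale_left f y (y + b * x) + scale_left f y (y - b)" .
  have "scale_fun f y (y + (d + a * x))
          \<le> scale_fun f y (y + b * x) + (scale_right f y (y + b) + scale_left f y (y - b))"
    using add_mono[OF right left] unfolding scale_fun_def by (simp add: ac_simps)
  also have "\<dots> \<le> scale_fun f y (y + b * x) + (scale_fun f y (y + b) + scale_fun f y (y - b))"
    unfolding scale_fun_def by (intro add_mono) (auto intro: add_increasing2 add_increasing)
  finally show ?thesis .
qed

text \<open>The scale function q of the paper is the scale function with density 2/eta^2: on each
  side of the base point only one of the two halves is nonzero.\<close>
lemma q_eq_scale_fun: "q \<eta> y x = scale_fun (\<lambda>z. ennreal (2 / (\<eta> z)\<^sup>2)) y x"
proof (cases "y \<le> x")
  case True
  then have "scale_left (\<lambda>z. ennreal (2 / (\<eta> z)\<^sup>2)) y x = 0"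
    using scale_left_le[of _ y x] by (simp add: ennreal_neg)
  then show ?thesis
    using True by (simp add: q_def scale_fun_def scale_right_def mass_def)
next
  case False
  then have "scale_right (\<lambda>z. ennreal (2 / (\<eta> z)\<^sup>2)) y x = 0"
    using scale_right_le[of _ y x] by (simp add: ennreal_neg)
  then show ?thesis
    using False by (simp add: q_def scale_fun_def scale_left_def mass_def)
qed

lemma set_integrable_nn_integral_finite:
  fixes g :: "real \<Rightarrow> real"
  assumes "set_integrable lborel A g"
  shows "(\<integral>\<^sup>+ z \<in> A. ennreal (g z) \<partial>lborel) < \<infinity>"
proof -
  have "(\<integral>\<^sup>+ z \<in> A. ennreal (g z) \<partial>lborel) \<le> (\<integral>\<^sup>+ z. ennreal (norm (indicator A z *\<^sub>R g z)) \<partial>lborel)"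
    by (intro nn_integral_mono) (auto simp: indicator_def)
  also have "\<dots> < \<infinity>"
    using assms by (simp add: set_integrable_def integrable_iff_bounded)
  finally show ?thesis .
qed

lemma scale_transfer_pointwise:
  fixes a x y y0 :: real
  assumes f: "f \<in> borel_measurable borel" and a: "0 \<le> a"
  defines "b \<equiv> \<bar>y - y0\<bar> + a"
  shows "scale_fun f y (y + a * x)
           \<le> scale_fun f y0 (y0 + b * x) + ((scale_fun f y0 (y0 + b) + scale_fun f y0 (y0 - b))
              + mass f (min y0 y) (max y0 y) * ennreal a * ennreal \<bar>x\<bar>)"
proof -
  have "ennreal \<bar>y + a * x - y\<bar> = ennreal a * ennreal \<bar>x\<bar>"
    using a by (simp add: abs_mult ennreal_mult)
  then have "scale_fun f y (y + a * x)
               \<le> scale_fun f y0 (y0 + ((y - y0) + a * x))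
                 + mass f (min y0 y) (max y0 y) * ennreal a * ennreal \<bar>x\<bar>"
    using scale_rebase[OF f, of y "y + a * x" y0] by (simp add: mult.assoc)
  also have "\<dots> \<le> (scale_fun f y0 (y0 + b * x) + (scale_fun f y0 (y0 + b) + scale_fun f y0 (y0 - b)))
                 + mass f (min y0 y) (max y0 y) * ennreal a * ennreal \<bar>x\<bar>"
    unfolding b_def by (intro add_right_mono scale_shift a)
  finally show ?thesis by (simp add: add.assoc)
qed

lemma scale_integral_transfer:
  assumes f: "f \<in> borel_measurable borel"
    and mass_finite: "\<And>a b. mass f a b < \<infinity>"
    and prob: "prob_space \<mu>" and sets_\<mu>: "sets \<mu> = sets borel"
    and first_moment: "(\<integral>\<^sup>+ x. ennreal \<bar>x\<bar> \<partial>\<mu>) < \<infinity>"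
    and base: "\<And>b. 0 < b \<Longrightarrow> (\<integral>\<^sup>+ x. scale_fun f y0 (y0 + b * x) \<partial>\<mu>) < \<infinity>"
    and a: "0 < a"
  shows "(\<integral>\<^sup>+ x. scale_fun f y (y + a * x) \<partial>\<mu>) < \<infinity>"
proof -
  interpret prob_space \<mu> by (rule prob)
  define b where "b = \<bar>y - y0\<bar> + a"
  define C where "C = scale_fun f y0 (y0 + b) + scale_fun f y0 (y0 - b)"
  define K where "K = mass f (min y0 y) (max y0 y)"
  have meas: "g \<in> borel_measurable \<mu>" if "g \<in> borel_measurable borel" for g :: "real \<Rightarrow> ennreal"
    using that measurable_cong_sets[OF sets_\<mu> refl] by blast
  have "(\<integral>\<^sup>+ x. scale_fun f y (y + a * x) \<partial>\<mu>)
          \<le> (\<integral>\<^sup>+ x. scale_fun f y0 (y0 + b * x) + (C + K * ennreal a * ennreal \<bar>x\<bar>) \<partial>\<mu>)"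
    unfolding b_def C_def K_def
    using a by (intro nn_integral_mono scale_transfer_pointwise[OF f]) simp
  also have "\<dots> = (\<integral>\<^sup>+ x. scale_fun f y0 (y0 + b * x) \<partial>\<mu>)
                   + (C + K * ennreal a * (\<integral>\<^sup>+ x. ennreal \<bar>x\<bar> \<partial>\<mu>))"
    using scale_fun_measurable[OF f] meas[of "\<lambda>x. ennreal \<bar>x\<bar>"]
    by (simp add: nn_integral_add nn_integral_cmult meas emeasure_space_1)
  also have "\<dots> < \<infinity>"
    using base[of b] a first_moment mass_finite scale_fun_finite[OF mass_finite]
    unfolding b_def C_def K_def by (simp add: ennreal_mult_less_top)
  finally show ?thesis .
qed

theorem mainTheorem2:
  fixes \<eta> :: "real \<Rightarrow> real" and \<mu> :: "real measure"
  assumes "\<eta> \<in> borel_measurable borel"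
    and "\<forall>z. \<eta> z \<noteq> 0"
    and "\<forall>a b. set_integrable lborel {a..b} (\<lambda>z. 1 / (\<eta> z)\<^sup>2)"
    and "prob_space \<mu>"
    and "sets \<mu> = sets borel"
    and "integrable \<mu> (\<lambda>x. x)"
    and "(\<integral>x. x \<partial>\<mu>) = 0"
    and "\<mu> \<noteq> return borel 0"
  shows "(\<exists>y. \<forall>a>0. G \<eta> \<mu> y a < \<infinity>) \<longleftrightarrow> (\<forall>y. \<forall>a>0. G \<eta> \<mu> y a < \<infinity>)"
proof
  assume "\<exists>y. \<forall>a>0. G \<eta> \<mu> y a < \<infinity>"
  then obtain y0 where base: "\<And>b. 0 < b \<Longrightarrow> G \<eta> \<mu> y0 b < \<infinity>" by blast
  define f where "f = (\<lambda>z. ennreal (2 / (\<eta> z)\<^sup>2))"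
  have G_eq: "G \<eta> \<mu> y a = (\<integral>\<^sup>+ x. scale_fun f y (y + a * x) \<partial>\<mu>)" for y a
    unfolding G_def f_def q_eq_scale_fun ..
  have f_meas: "f \<in> borel_measurable borel"
    unfolding f_def using assms(1) by measurable
  have mass_finite: "mass f a b < \<infinity>" for a b
  proof -
    have "set_integrable lborel {a..b} (\<lambda>z. 2 * (1 / (\<eta> z)\<^sup>2))"
      using assms(3) by (intro set_integrable_mult_right) auto
    then show ?thesis
      unfolding mass_def f_def by (auto dest: set_integrable_nn_integral_finite)
  qed
  have first_moment: "(\<integral>\<^sup>+ x. ennreal \<bar>x\<bar> \<partial>\<mu>) < \<infinity>"
    using assms(6) by (simp add: integrable_iff_bounded)
  show "\<forall>y. \<forall>a>0. G \<eta> \<mu> y a < \<infinity>"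
    using scale_integral_transfer[OF f_meas mass_finite assms(4,5) first_moment] base
    unfolding G_eq by blast
qed (blast)

end
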